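(* No finite cyclic group has an $n$-power-free decomposition, for any integer $n\geqslant1$.
   Context: The power graph $\mathcal{P}(G)$ of a finite group $G$ has vertex set $G$, two distinct elements being adjacent when one is a power of the other. An $n$-power-free decomposition of $G$ ($n\geqslant1$) is a partition $G=C\uplus B_1\uplus\cdots\uplus B_n$ of $G$ into a cyclic $p$-subgroup $C$ of maximal order (for some prime $p$) and $n$ nonempty subsets $B_1,\ldots,B_n$ such that each $B_i$ is an independent set (pairwise nonadjacent vertices) of $\mathcal{P}(G)$ and $|B_i|>1$ for each $i$. *)

theory Defs
  imports "HOL-Algebra.Elementary_Groups" "HOL-Computational_Algebra.Primes"
begin

definition power_adj :: "('a, 'b) monoid_scheme \<Rightarrow> 'a \<Rightarrow> 'a \<Rightarrow> bool" where
  "power_adj G x y \<longleftrightarrow> x \<in> carrier G \<and> y \<in> carrier G \<and> x \<noteq> y \<and>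
     ((\<exists>k::int. y = x [^]\<^bsub>G\<^esub> k) \<or> (\<exists>k::int. x = y [^]\<^bsub>G\<^esub> k))"

definition power_independent :: "('a, 'b) monoid_scheme \<Rightarrow> 'a set \<Rightarrow> bool" where
  "power_independent G B \<longleftrightarrow> B \<subseteq> carrier G \<and> (\<forall>x\<in>B. \<forall>y\<in>B. \<not> power_adj G x y)"

definition cyclic_p_subgroup :: "('a, 'b) monoid_scheme \<Rightarrow> nat \<Rightarrow> 'a set \<Rightarrow> bool" where
  "cyclic_p_subgroup G p C \<longleftrightarrow> subgroup C G \<and> (\<exists>x\<in>C. C = generate G {x}) \<and>
     (\<exists>k::nat. card C = p ^ k)"

definition max_cyclic_p_subgroup :: "('a, 'b) monoid_scheme \<Rightarrow> nat \<Rightarrow> 'a set \<Rightarrow> bool" where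
  "max_cyclic_p_subgroup G p C \<longleftrightarrow> cyclic_p_subgroup G p C \<and>
     (\<forall>D. cyclic_p_subgroup G p D \<longrightarrow> card D \<le> card C)"

definition power_free_decomposition ::
  "('a, 'b) monoid_scheme \<Rightarrow> nat \<Rightarrow> 'a set \<Rightarrow> (nat \<Rightarrow> 'a set) \<Rightarrow> bool" where
  "power_free_decomposition G n C B \<longleftrightarrow>
     n \<ge> 1 \<and>
     (\<exists>p. prime p \<and> max_cyclic_p_subgroup G p C) \<and>
     carrier G = C \<union> (\<Union>i<n. B i) \<and>
     (\<forall>i<n. C \<inter> B i = {}) \<and>
     (\<forall>i<n. \<forall>j<n. i \<noteq> j \<longrightarrow> B i \<inter> B j = {}) \<and>
     (\<forall>i<n. B i \<noteq> {} \<and> power_independent G (B i) \<and> card (B i) > 1)"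

end

theory Submission
  imports Defs
begin

text \<open>A generator of a cyclic group is adjacent to every other vertex of the power graph, so it
  lies in no independent set with two elements and must belong to C. But a subgroup containing
  a generator is the whole group, leaving no room for the nonempty sets B i.\<close>

lemma power_free_decomposition_subgroup:
  assumes "power_free_decomposition G n C B"
  shows "subgroup C G"
  using assms
  unfolding power_free_decomposition_def max_cyclic_p_subgroup_def cyclic_p_subgroup_def
  by blast

lemma power_free_decomposition_proper:
  assumes "power_free_decomposition G n C B"
  shows "C \<subset> carrier G"
proof -
  have "B 0 \<noteq> {}" "B 0 \<subseteq> carrier G" "C \<inter> B 0 = {}"
    using assms unfolding power_free_decomposition_def power_independent_def by auto
  moreover have "C \<subseteq> carrier G"
    using power_free_decomposition_subgroup[OF assms] by (rule subgroup.subset)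
  ultimately show ?thesis by blast
qed

lemma power_independent_dominating_vertex:
  assumes "power_independent G B" and "g \<in> B"
    and "\<And>y. y \<in> carrier G \<Longrightarrow> y \<noteq> g \<Longrightarrow> power_adj G g y"
  shows "B = {g}"
  using assms unfolding power_independent_def by blast

lemma power_free_decomposition_dominating_vertex:
  assumes decomp: "power_free_decomposition G n C B" and g: "g \<in> carrier G"
    and dominating: "\<And>y. y \<in> carrier G \<Longrightarrow> y \<noteq> g \<Longrightarrow> power_adj G g y"
  shows "g \<in> C"
proof (rule ccontr)
  assume "g \<notin> C"
  then obtain i where i: "i < n" "g \<in> B i"
    using decomp g unfolding power_free_decomposition_def by blast
  then have "power_independent G (B i)" "card (B i) > 1"
    using decomp unfolding power_free_decomposition_def by auto
  moreover from this(1) have "B i = {g}"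
    using i(2) dominating by (rule power_independent_dominating_vertex)
  ultimately show False by simp
qed

lemma power_adj_generator:
  assumes gen: "carrier G = range (\<lambda>k::int. g [^]\<^bsub>G\<^esub> k)" and "g \<in> carrier G"
    and "y \<in> carrier G" "y \<noteq> g"
  shows "power_adj G g y"
proof -
  obtain k :: int where "y = g [^]\<^bsub>G\<^esub> k"
    using gen \<open>y \<in> carrier G\<close> by blast
  then show ?thesis
    using assms(2-4) unfolding power_adj_def by blast
qed

lemma (in group) subgroup_generator_eq_carrier:
  assumes gen: "carrier G = range (\<lambda>k::int. g [^] k)" and "subgroup H G" "g \<in> H"
  shows "H = carrier G"
proof
  show "H \<subseteq> carrier G"
    using assms(2) by (rule subgroup.subset)
  show "carrier G \<subseteq> H"
    using gen subgroup_int_pow_closed[OF assms(2,3)] by auto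
qed

theorem proposition3p5:
  fixes G :: "('a, 'b) monoid_scheme" and n :: nat
  assumes "group G" and "finite (carrier G)" and "cyclic_group G" and "n \<ge> 1"
  shows "\<not> (\<exists>C B. power_free_decomposition G n C B)"
proof
  interpret group G by (rule assms(1))
  assume "\<exists>C B. power_free_decomposition G n C B"
  then obtain C B where decomp: "power_free_decomposition G n C B" by blast
  obtain g where g: "g \<in> carrier G" and gen: "carrier G = range (\<lambda>k::int. g [^]\<^bsub>G\<^esub> k)"
    using assms(3) cyclic_group by blast
  have "g \<in> C"
    using decomp g power_adj_generator[OF gen g] by (rule power_free_decomposition_dominating_vertex)
  with gen power_free_decomposition_subgroup[OF decomp] have "C = carrier G"
    by (rule subgroup_generator_eq_carrier)
  with power_free_decomposition_proper[OF decomp] show False by blast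
qed

end
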